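(* Let $k$ be a positive integer and let $D=(V,A,w)$ be a weighted digraph with maximum out-degree $\Delta^+(D)\le k$ or maximum in-degree $\Delta^-(D)\le k$. Then $\mathrm{mac}(D)\ge\left(\frac14+\frac{1}{8k+4}\right)w(D)$.
   Context: A weighted digraph $D=(V,A,w)$ is a digraph without loops or parallel arcs (opposite arcs allowed) with weights $w:A\to\mathbb{R}_{\ge0}$; $w(D)$ is the total arc weight. Degrees are numbers of arcs (unweighted). For a partition $(X,Y)$ of $V$, $w(X,Y)$ is the total weight of arcs from $X$ to $Y$, and $\mathrm{mac}(D)=\max_{(X,Y)} w(X,Y)$ over all partitions. *)

theory Defs
  imports Complex_Main
begin

text \<open>A weighted digraph is given by a finite vertex set V, an arc set A of ordered
pairs (no parallel arcs by construction; opposite arcs allowed), without loops,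
and a nonnegative weight function w on A.\<close>

definition weighted_digraph :: "'a set \<Rightarrow> ('a \<times> 'a) set \<Rightarrow> ('a \<times> 'a \<Rightarrow> real) \<Rightarrow> bool" where
  "weighted_digraph V A w \<longleftrightarrow> finite V \<and> A \<subseteq> V \<times> V \<and> (\<forall>v. (v, v) \<notin> A)
     \<and> (\<forall>a\<in>A. w a \<ge> 0)"

definition total_weight :: "('a \<times> 'a) set \<Rightarrow> ('a \<times> 'a \<Rightarrow> real) \<Rightarrow> real" where
  "total_weight A w = (\<Sum>a\<in>A. w a)"

definition out_degree :: "('a \<times> 'a) set \<Rightarrow> 'a \<Rightarrow> nat" where
  "out_degree A v = card {u. (v, u) \<in> A}"

definition in_degree :: "('a \<times> 'a) set \<Rightarrow> 'a \<Rightarrow> nat" where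
  "in_degree A v = card {u. (u, v) \<in> A}"

definition cut_weight :: "('a \<times> 'a) set \<Rightarrow> ('a \<times> 'a \<Rightarrow> real) \<Rightarrow> 'a set \<Rightarrow> 'a set \<Rightarrow> real" where
  "cut_weight A w X Y = (\<Sum>a\<in>{(x, y) \<in> A. x \<in> X \<and> y \<in> Y}. w a)"

definition mac :: "'a set \<Rightarrow> ('a \<times> 'a) set \<Rightarrow> ('a \<times> 'a \<Rightarrow> real) \<Rightarrow> real" where
  "mac V A w = Max ((\<lambda>X. cut_weight A w X (V - X)) ` Pow V)"

end

theory Submission
  imports Defs
begin

text \<open>If every out-degree is at most \<open>k\<close>, every subdigraph has average total degree at
most \<open>2k\<close>, so the underlying graph is \<open>2k\<close>-degenerate and has a proper colouring with
\<open>2k + 1\<close> colours (for bounded in-degree, reverse all arcs). Now let \<open>X\<close> be the union of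
the colour classes of a uniformly random \<open>k\<close>-subset of the colours. An arc joins two
different colours, so it goes from \<open>X\<close> to its complement with probability
\<open>C(2k-1, k-1) / C(2k+1, k) = 1/4 + 1/(8k+4)\<close>, and some choice of \<open>X\<close> does at least as well
as the average.\<close>

definition neighbours :: "('a \<times> 'a) set \<Rightarrow> 'a set \<Rightarrow> 'a \<Rightarrow> 'a set" where
  "neighbours A S v = {u\<in>S. (u, v) \<in> A \<or> (v, u) \<in> A}"

lemma card_filter_eq_sum: "finite S \<Longrightarrow> card {u\<in>S. P u} = (\<Sum>u\<in>S. if P u then 1 else 0::nat)"
  by (simp add: sum.inter_filter[symmetric])

lemma exists_vertex_few_neighbours:
  assumes fin: "finite S" and ne: "S \<noteq> {}"
    and out: "\<forall>v\<in>S. card {u\<in>S. (v, u) \<in> A} \<le> k"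
  shows "\<exists>v\<in>S. card (neighbours A S v) \<le> 2 * k"
proof (rule ccontr)
  assume "\<not> ?thesis"
  hence many: "\<forall>v\<in>S. 2 * k + 1 \<le> card (neighbours A S v)" by auto
  have split: "card (neighbours A S v) \<le> card {u\<in>S. (u, v) \<in> A} + card {u\<in>S. (v, u) \<in> A}" for v
  proof -
    have "neighbours A S v = {u\<in>S. (u, v) \<in> A} \<union> {u\<in>S. (v, u) \<in> A}"
      by (auto simp: neighbours_def)
    thus ?thesis by (simp add: card_Un_le)
  qed
  have in_out: "(\<Sum>v\<in>S. card {u\<in>S. (u, v) \<in> A}) = (\<Sum>v\<in>S. card {u\<in>S. (v, u) \<in> A})"
    using fin by (simp add: card_filter_eq_sum) (rule sum.swap)
  have "(2 * k + 1) * card S = (\<Sum>v\<in>S. 2 * k + 1)"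
    by simp
  also have "\<dots> \<le> (\<Sum>v\<in>S. card (neighbours A S v))"
    using many by (intro sum_mono) blast
  also have "\<dots> \<le> (\<Sum>v\<in>S. card {u\<in>S. (u, v) \<in> A} + card {u\<in>S. (v, u) \<in> A})"
    by (rule sum_mono) (rule split)
  also have "\<dots> = 2 * (\<Sum>v\<in>S. card {u\<in>S. (v, u) \<in> A})"
    by (simp only: sum.distrib in_out mult_2)
  also have "\<dots> \<le> 2 * (\<Sum>v\<in>S. k)"
    using out by (intro mult_le_mono2 sum_mono) blast
  also have "\<dots> = 2 * k * card S"
    by simp
  finally show False
    using fin ne by (simp add: card_gt_0_iff)
qed

lemma greedy_colouring:
  fixes A :: "('a \<times> 'a) set" and d :: nat
  assumes fin: "finite V" and loopfree: "\<forall>v. (v, v) \<notin> A"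
    and degenerate: "\<And>S. S \<subseteq> V \<Longrightarrow> S \<noteq> {} \<Longrightarrow> \<exists>v\<in>S. card (neighbours A S v) \<le> d"
  shows "\<exists>c::'a \<Rightarrow> nat. (\<forall>v\<in>V. c v \<le> d) \<and> (\<forall>u\<in>V. \<forall>v\<in>V. (u, v) \<in> A \<longrightarrow> c u \<noteq> c v)"
  using fin
proof (induction V rule: finite_remove_induct)
  case empty
  show ?case by simp
next
  case (remove S)
  obtain v where v: "v \<in> S" and few: "card (neighbours A S v) \<le> d"
    using degenerate[OF remove.hyps(3,2)] by blast
  obtain c :: "'a \<Rightarrow> nat" where c_le: "\<forall>x\<in>S - {v}. c x \<le> d"
    and c_proper: "\<forall>u\<in>S - {v}. \<forall>x\<in>S - {v}. (u, x) \<in> A \<longrightarrow> c u \<noteq> c x"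
    using remove.IH[OF v] by blast
  let ?N = "neighbours A S v"
  have "card (c ` ?N) < card {..d}"
    using card_image_le[of ?N c] remove.hyps(1) few by (simp add: neighbours_def)
  then have "\<not> {..d} \<subseteq> c ` ?N"
    using card_mono[of "c ` ?N" "{..d}"] remove.hyps(1) by (auto simp: neighbours_def)
  then obtain col where col: "col \<le> d" "col \<notin> c ` ?N"
    by auto
  have "\<forall>u\<in>S. \<forall>x\<in>S. (u, x) \<in> A \<longrightarrow> (c(v := col)) u \<noteq> (c(v := col)) x"
    using c_proper col loopfree by (auto simp: neighbours_def)
  moreover have "\<forall>x\<in>S. (c(v := col)) x \<le> d"
    using c_le col by auto
  ultimately show ?case by blast
qed

lemma proper_colouring_bounded_out_degree:
  fixes A :: "('a \<times> 'a) set"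
  assumes fin: "finite V" and arcs: "A \<subseteq> V \<times> V" and loopfree: "\<forall>v. (v, v) \<notin> A"
    and out: "\<forall>v\<in>V. out_degree A v \<le> k"
  shows "\<exists>c::'a \<Rightarrow> nat. (\<forall>v\<in>V. c v \<le> 2 * k) \<and> (\<forall>(u, v)\<in>A. c u \<noteq> c v)"
proof -
  have "\<exists>v\<in>S. card (neighbours A S v) \<le> 2 * k" if S: "S \<subseteq> V" "S \<noteq> {}" for S
  proof (rule exists_vertex_few_neighbours)
    show "finite S" using S fin finite_subset by blast
    show "\<forall>v\<in>S. card {u\<in>S. (v, u) \<in> A} \<le> k"
    proof
      fix v assume "v \<in> S"
      have "finite {u. (v, u) \<in> A}"
        by (rule finite_subset[of _ V]) (use arcs fin in auto)
      then have "card {u\<in>S. (v, u) \<in> A} \<le> out_degree A v"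
        unfolding out_degree_def by (rule card_mono) auto
      then show "card {u\<in>S. (v, u) \<in> A} \<le> k"
        using out \<open>v \<in> S\<close> S(1) by force
    qed
  qed fact
  from greedy_colouring[OF fin loopfree this] obtain c :: "'a \<Rightarrow> nat"
    where "\<forall>v\<in>V. c v \<le> 2 * k" and "\<forall>u\<in>V. \<forall>v\<in>V. (u, v) \<in> A \<longrightarrow> c u \<noteq> c v"
    by blast
  moreover have "\<forall>(u, v)\<in>A. u \<in> V \<and> v \<in> V"
    using arcs by auto
  ultimately show ?thesis
    by fast
qed

lemma in_degree_eq_out_degree_converse: "in_degree A v = out_degree (A\<inverse>) v"
  by (simp add: in_degree_def out_degree_def)

lemma proper_colouring_bounded_degree:
  fixes A :: "('a \<times> 'a) set"
  assumes fin: "finite V" and arcs: "A \<subseteq> V \<times> V" and loopfree: "\<forall>v. (v, v) \<notin> A"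
    and deg: "(\<forall>v\<in>V. out_degree A v \<le> k) \<or> (\<forall>v\<in>V. in_degree A v \<le> k)"
  shows "\<exists>c::'a \<Rightarrow> nat. (\<forall>v\<in>V. c v \<le> 2 * k) \<and> (\<forall>(u, v)\<in>A. c u \<noteq> c v)"
  using deg
proof
  assume "\<forall>v\<in>V. out_degree A v \<le> k"
  then show ?thesis by (rule proper_colouring_bounded_out_degree[OF fin arcs loopfree])
next
  assume "\<forall>v\<in>V. in_degree A v \<le> k"
  then have "\<forall>v\<in>V. out_degree (A\<inverse>) v \<le> k"
    by (simp add: in_degree_eq_out_degree_converse)
  moreover have "A\<inverse> \<subseteq> V \<times> V" and "\<forall>v. (v, v) \<notin> A\<inverse>"
    using arcs loopfree by auto
  ultimately obtain c :: "'a \<Rightarrow> nat" where "\<forall>v\<in>V. c v \<le> 2 * k"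
    and proper: "\<forall>(u, v)\<in>A\<inverse>. c u \<noteq> c v"
    using proper_colouring_bounded_out_degree[OF fin] by blast
  moreover have "\<forall>(u, v)\<in>A. c u \<noteq> c v"
  proof clarify
    fix u v assume "(u, v) \<in> A" "c u = c v"
    then show False using proper[rule_format, of "(v, u)"] by simp
  qed
  ultimately show ?thesis by blast
qed

lemma card_subsets_separating:
  assumes fin: "finite M" and ij: "i \<in> M" "j \<in> M" "i \<noteq> j" and k: "k \<ge> 1"
  shows "card {I. I \<subseteq> M \<and> card I = k \<and> i \<in> I \<and> j \<notin> I} = (card M - 2) choose (k - 1)"
proof -
  let ?L = "{J. J \<subseteq> M - {i, j} \<and> card J = k - 1}"
  let ?R = "{I. I \<subseteq> M \<and> card I = k \<and> i \<in> I \<and> j \<notin> I}"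
  have "bij_betw (insert i) ?L ?R"
  proof (rule bij_betw_byWitness[where f' = "\<lambda>I. I - {i}"])
    show "insert i ` ?L \<subseteq> ?R"
      using fin ij k by (auto simp: finite_subset card_insert_if)
    show "(\<lambda>I. I - {i}) ` ?R \<subseteq> ?L"
      using fin by (auto simp: finite_subset)
  qed auto
  then have "card ?R = card (M - {i, j}) choose (k - 1)"
    using fin by (simp add: bij_betw_same_card[symmetric] n_subsets)
  also have "card (M - {i, j}) = card M - 2"
    using fin ij by (simp add: card_Diff_subset)
  finally show ?thesis .
qed

lemma central_binomial_ratio:
  assumes "k \<ge> 1"
  shows "real (2 * k - 1 choose (k - 1)) = (1/4 + 1 / (8 * real k + 4)) * real (2 * k + 1 choose k)"
proof -
  obtain j where k: "k = Suc j" using assms by (cases k) auto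
  define a where "a = Suc (2 * j) choose j"
  define b where "b = Suc (Suc (2 * j)) choose Suc j"
  define c where "c = Suc (Suc (Suc (2 * j))) choose Suc j"
  have ab: "Suc (Suc (2 * j)) * a = b * Suc j"
    unfolding a_def b_def by (rule Suc_times_binomial_eq)
  have "Suc (Suc (Suc (2 * j))) * b = (Suc (Suc (Suc (2 * j))) choose Suc (Suc j)) * Suc (Suc j)"
    unfolding b_def by (rule Suc_times_binomial_eq)
  also have "Suc (Suc (Suc (2 * j))) choose Suc (Suc j) = c"
    unfolding c_def by (subst binomial_symmetric) (auto simp del: binomial_Suc_Suc)
  finally have bc: "Suc (Suc (Suc (2 * j))) * b = c * Suc (Suc j)" .
  have "b * Suc j = 2 * a * Suc j"
    using ab by (simp add: algebra_simps)
  then have "b = 2 * a"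
    by (simp only: mult_cancel2) simp
  then have "real c * (real j + 2) = 2 * (2 * real j + 3) * real a"
    using arg_cong[OF bc, of real] by (simp add: algebra_simps)
  moreover have "2 * k - 1 choose (k - 1) = a" and "2 * k + 1 choose k = c"
    unfolding a_def c_def k by simp_all
  ultimately show ?thesis
    unfolding k by (simp add: field_simps)
qed

lemma cut_weight_eq_sum_if:
  assumes "finite A" and "A \<subseteq> V \<times> V"
  shows "cut_weight A w X (V - X) = (\<Sum>a\<in>A. if fst a \<in> X \<and> snd a \<notin> X then w a else 0)"
proof -
  have "{(x, y) \<in> A. x \<in> X \<and> y \<in> V - X} = {a\<in>A. fst a \<in> X \<and> snd a \<notin> X}"
    using assms(2) by auto
  then show ?thesis
    unfolding cut_weight_def using sum.inter_filter[OF assms(1)] by simp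
qed

lemma cut_weight_le_mac:
  assumes "finite V" and "X \<subseteq> V"
  shows "cut_weight A w X (V - X) \<le> mac V A w"
  unfolding mac_def using assms by (intro Max_ge) auto

lemma mac_ge_average_cut:
  fixes X :: "'i \<Rightarrow> 'a set"
  assumes fin: "finite V" and arcs: "A \<subseteq> V \<times> V" and finF: "finite F"
    and sub: "\<forall>I\<in>F. X I \<subseteq> V"
    and cuts: "\<forall>a\<in>A. card {I\<in>F. fst a \<in> X I \<and> snd a \<notin> X I} = N"
  shows "real N * total_weight A w \<le> real (card F) * mac V A w"
proof -
  have finA: "finite A" using fin arcs finite_subset by blast
  have "real N * total_weight A w = (\<Sum>a\<in>A. \<Sum>I\<in>F. if fst a \<in> X I \<and> snd a \<notin> X I then w a else 0)"
    using cuts finF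
    by (simp add: total_weight_def sum_distrib_left sum.If_cases Int_def mult.commute)
  also have "\<dots> = (\<Sum>I\<in>F. cut_weight A w (X I) (V - X I))"
    using finA arcs by (simp add: cut_weight_eq_sum_if sum.swap[of _ F A])
  also have "\<dots> \<le> (\<Sum>I\<in>F. mac V A w)"
    using fin sub by (intro sum_mono cut_weight_le_mac) auto
  finally show ?thesis by simp
qed

theorem mainTheorem2:
  fixes V :: "'a set" and A :: "('a \<times> 'a) set" and w :: "'a \<times> 'a \<Rightarrow> real" and k :: nat
  assumes "k > 0"
    and "weighted_digraph V A w"
    and "(\<forall>v\<in>V. out_degree A v \<le> k) \<or> (\<forall>v\<in>V. in_degree A v \<le> k)"
  shows "mac V A w \<ge> (1/4 + 1 / (8 * real k + 4)) * total_weight A w"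
proof -
  have fin: "finite V" and arcs: "A \<subseteq> V \<times> V" and loopfree: "\<forall>v. (v, v) \<notin> A"
    using assms(2) by (auto simp: weighted_digraph_def)
  obtain c :: "'a \<Rightarrow> nat" where colours: "\<forall>v\<in>V. c v \<le> 2 * k"
    and proper: "\<forall>(u, v)\<in>A. c u \<noteq> c v"
    using proper_colouring_bounded_degree[OF fin arcs loopfree assms(3)] by blast
  define F where "F = {I. I \<subseteq> {..2 * k} \<and> card I = k}"
  define X where "X I = {v\<in>V. c v \<in> I}" for I
  have "card {I\<in>F. fst a \<in> X I \<and> snd a \<notin> X I} = 2 * k - 1 choose (k - 1)" if a: "a \<in> A" for a
  proof -
    have "{I\<in>F. fst a \<in> X I \<and> snd a \<notin> X I}
        = {I. I \<subseteq> {..2 * k} \<and> card I = k \<and> c (fst a) \<in> I \<and> c (snd a) \<notin> I}"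
      using a arcs by (auto simp: F_def X_def)
    also have "card \<dots> = 2 * k - 1 choose (k - 1)"
      using a arcs colours proper assms(1)
      by (subst card_subsets_separating) (auto simp: numeral_2_eq_2)
    finally show ?thesis .
  qed
  then have "real (2 * k - 1 choose (k - 1)) * total_weight A w \<le> real (card F) * mac V A w"
    by (intro mac_ge_average_cut[OF fin arcs, where X = X]) (auto simp: F_def X_def)
  moreover have "card F = 2 * k + 1 choose k"
    by (simp add: F_def n_subsets)
  ultimately show ?thesis
    using central_binomial_ratio[of k] assms(1) by (simp add: mult.assoc)
qed

end
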